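(* Let $\mathcal A:=\{x\in\mathbb X:\mathcal R_{(x,0)}=\mathbb S\}$. (i) If $x\in\mathbb X$ satisfies $\mathbb P_{(x,0)}(X_n\in\mathcal A\text{ for infinitely many }n)=1$, then $x\in\mathcal A$. (ii) If $(X_n)_n$ is Harris recurrent and $\mathcal R_{(\pi,0)}=\mathbb S$, then $\mathcal A=\mathbb X$, and hence $\mathcal R_{(\mu,0)}=\mathbb S$ for every initial distribution $\mu$.
   Context: $(\mathbb X,\mathcal X)$ is a measurable space. A Markov random walk (MRW) on $\mathbb X\times\mathbb R^2$ is a Markov chain $(X_n,S_n)_{n\ge0}$ with values in $\mathbb X\times\mathbb R^2$ whose transition kernel $P$ satisfies $P((x,s);A\times S)=P((x,0);A\times(S-s))$ for all $(x,s)\in\mathbb X\times\mathbb R^2$, $A\in\mathcal X$ and Borel $S\subset\mathbb R^2$; then $(X_n)_n$ is itself a Markov chain (the driving chain), with transition kernel denoted $Q$. One always takes $S_0=0$. For a probability measure $\mu$ on $\mathbb X$, $\mathbb P_{(\mu,0)}$ is the law of the chain with $X_0\sim\mu$, $S_0=0$; $\mathbb P_{(x,0)}:=\mathbb P_{(\delta_x,0)}$. Standing assumptions: $Q$ has an invariant probability measure $\pi$; $S_1$ is $\mathbb P_{(\pi,0)}$-integrable with $\mathbb E_{(\pi,0)}[S_1]=0$; there is a two-dimensional closed subgroup $\mathbb S$ of $\mathbb R^2$ with $\mathbb P_{(x,0)}(S_n\in\mathbb S)=1$ for all $x\in\mathbb X$, $n\ge0$. The recurrence set is $\mathcal R_{(\mu,0)}:=\{s\in\mathbb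 S:\ \forall\varepsilon>0,\ \mathbb P_{(\mu,0)}(|S_n-s|<\varepsilon\text{ for infinitely many }n)=1\}$, $\mathcal R_{(x,0)}:=\mathcal R_{(\delta_x,0)}$. $(X_n)_n$ is Harris recurrent if for every $B\in\mathcal X$ with $\pi(B)>0$ and every $x$, $\mathbb P_{(x,0)}(X_k\in B\text{ i.o.})=1$. *)

theory Defs
  imports "HOL-Probability.Probability"
begin

text \<open>A chain with transition kernel \<open>P\<close> is described by the family \<open>L\<close> of its path laws
  \<open>L z\<close> (law of \<open>(Z\<^sub>n)\<^sub>n\<close> on the stream space, started at \<open>Z\<^sub>0 = z\<close>), characterised by the
  Markov property: the first step is drawn from \<open>P z\<close>, then the chain restarts.\<close>

definition markov_law ::
  "('s \<Rightarrow> 's measure) \<Rightarrow> 's measure \<Rightarrow> ('s \<Rightarrow> 's stream measure) \<Rightarrow> bool" where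
  "markov_law K N L \<longleftrightarrow>
     L \<in> N \<rightarrow>\<^sub>M prob_algebra (stream_space N) \<and>
     (\<forall>z\<in>space N. L z = K z \<bind> (\<lambda>t. distr (L t) (stream_space N) (\<lambda>\<omega>. z ## \<omega>)))"

definition MRW_kernel :: "'a measure \<Rightarrow> ('a \<times> (real^2) \<Rightarrow> ('a \<times> (real^2)) measure) \<Rightarrow> bool" where
  "MRW_kernel M P \<longleftrightarrow>
     P \<in> M \<Otimes>\<^sub>M (borel :: (real^2) measure) \<rightarrow>\<^sub>M prob_algebra (M \<Otimes>\<^sub>M borel) \<and>
     (\<forall>x\<in>space M. \<forall>s. \<forall>A\<in>sets M. \<forall>B\<in>sets (borel :: (real^2) measure).
        emeasure (P (x, s)) (A \<times> B) = emeasure (P (x, 0)) (A \<times> ((\<lambda>t. t - s) ` B)))"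

definition drive_kernel :: "'a measure \<Rightarrow> ('a \<times> (real^2) \<Rightarrow> ('a \<times> (real^2)) measure) \<Rightarrow> 'a \<Rightarrow> 'a measure" where
  "drive_kernel M P x = distr (P (x, 0)) M fst"

definition invariant_prob :: "'a measure \<Rightarrow> ('a \<Rightarrow> 'a measure) \<Rightarrow> 'a measure \<Rightarrow> bool" where
  "invariant_prob M Q \<pi> \<longleftrightarrow> prob_space \<pi> \<and> sets \<pi> = sets M \<and>
     (\<forall>A\<in>sets M. (\<integral>\<^sup>+ x. emeasure (Q x) A \<partial>\<pi>) = emeasure \<pi> A)"

definition closed_subgroup_2d :: "(real^2) set \<Rightarrow> bool" where
  "closed_subgroup_2d G \<longleftrightarrow> closed G \<and> 0 \<in> G \<and> (\<forall>a\<in>G. \<forall>b\<in>G. a - b \<in> G) \<and> span G = UNIV"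

definition init_law :: "('a \<times> (real^2) \<Rightarrow> ('a \<times> (real^2)) stream measure) \<Rightarrow> 'a measure
     \<Rightarrow> ('a \<times> (real^2)) stream measure" where
  "init_law L \<mu> = \<mu> \<bind> (\<lambda>x. L (x, 0))"

definition Xn :: "nat \<Rightarrow> ('a \<times> (real^2)) stream \<Rightarrow> 'a" where "Xn n \<omega> = fst (\<omega> !! n)"
definition Sn :: "nat \<Rightarrow> ('a \<times> (real^2)) stream \<Rightarrow> real^2" where "Sn n \<omega> = snd (\<omega> !! n)"

definition rec_set :: "(real^2) set \<Rightarrow> ('a \<times> (real^2)) stream measure \<Rightarrow> (real^2) set" where
  "rec_set G Pr = {s \<in> G. \<forall>\<epsilon>>0.
      measure Pr {\<omega> \<in> space Pr. infinite {n. norm (Sn n \<omega> - s) < \<epsilon>}} = 1}"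

definition harris_recurrent ::
  "'a measure \<Rightarrow> ('a \<times> (real^2) \<Rightarrow> ('a \<times> (real^2)) stream measure) \<Rightarrow> 'a measure \<Rightarrow> bool" where
  "harris_recurrent M L \<pi> \<longleftrightarrow>
     (\<forall>B\<in>sets M. measure \<pi> B > 0 \<longrightarrow> (\<forall>x\<in>space M.
        measure (init_law L (return M x)) {\<omega> \<in> space (init_law L (return M x)). infinite {k. Xn k \<omega> \<in> B}} = 1))"

end

theory Submission
  imports Defs
begin

(* The proof uses
   only three features of the chain: the Markov property of the path laws, invariance of the
   transition kernel under translations of the \<real>\<^sup>2-coordinate, and the fact that the walk
   stays in the group G.

   1. Path laws are determined by the kernel (coinduction on stream space); hence translation
      invariance of the kernel lifts to the path laws.
   2. For the event near_io s \<epsilon> ("S_n is \<epsilon>-close to s infinitely often"), which is invariant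
      under prepending states, a first-step induction shows: once the chain sits in a state from
      which the event is almost sure, the event is almost sure.
   3. Part (i): visiting \<A> at time n at position (X_n, S_n), S_n \<in> G, the translated chain is
      recurrent to s - S_n \<in> G, so by 1 and 2 the original chain is recurrent to s.
   4. Part (ii): reducing to countably many targets and radii, the set of \<pi>-almost surely good
      starting points is measurable of \<pi>-measure one; Harris recurrence forces every chain to
      visit it, and part (i) gives \<A> = X.  Mixing over an initial law \<mu> finishes the proof. *)

lemma (in prob_space) measure_Collect_eq_1_iff_AE:
  assumes "{x \<in> space M. Q x} \<in> events"
  shows "measure M {x \<in> space M. Q x} = 1 \<longleftrightarrow> (AE x in M. Q x)"
  using prob_eq_1[OF assms] by (simp add: AE_iff_measurable)

(* A set of probability one is automatically an event (non-events get measure 0),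
   so a probability-one statement can always be read as an almost-sure one. *)
lemma (in prob_space) AE_of_measure_Collect_eq_1:
  assumes "measure M {x \<in> space M. Q x} = 1"
  shows "AE x in M. Q x"
proof -
  have "{x \<in> space M. Q x} \<in> events"
    using assms measure_notin_sets by fastforce
  then show ?thesis using assms measure_Collect_eq_1_iff_AE by blast
qed

lemma markov_law_head_tail:
  assumes K: "K \<in> N \<rightarrow>\<^sub>M prob_algebra N" and L: "markov_law K N L" and z: "z \<in> space N"
  shows "L z = (K z \<bind> L) \<bind> (\<lambda>\<omega>. return (stream_space N) (z ## \<omega>))"
proof -
  have L_meas: "L \<in> N \<rightarrow>\<^sub>M prob_algebra (stream_space N)"
    using L unfolding markov_law_def by blast
  have Kz: "K z \<in> space (prob_algebra N)" using measurable_space[OF K z] .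
  then have sets_Kz: "sets (K z) = sets N" and ne: "space (K z) \<noteq> {}"
    by (auto simp: space_prob_algebra dest: prob_space.not_empty)
  have Cons_meas: "(\<lambda>\<omega>. z ## \<omega>) \<in> stream_space N \<rightarrow>\<^sub>M stream_space N"
    using z by measurable
  have "L z = K z \<bind> (\<lambda>t. distr (L t) (stream_space N) (\<lambda>\<omega>. z ## \<omega>))"
    using L z unfolding markov_law_def by blast
  also have "\<dots> = distr (K z \<bind> L) (stream_space N) (\<lambda>\<omega>. z ## \<omega>)"
    by (rule distr_bind[symmetric, OF _ ne Cons_meas])
       (simp add: measurable_cong_sets[OF sets_Kz refl] measurable_prob_algebraD[OF L_meas])
  also have "\<dots> = (K z \<bind> L) \<bind> (\<lambda>\<omega>. return (stream_space N) (z ## \<omega>))"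
  proof (rule bind_return_distr'[symmetric])
    have "prob_space (K z \<bind> L)" "sets (K z \<bind> L) = sets (stream_space N)"
      using prob_space_bind'[OF Kz L_meas] sets_bind'[OF Kz L_meas] .
    then show "space (K z \<bind> L) \<noteq> {}" "(\<lambda>\<omega>. z ## \<omega>) \<in> (K z \<bind> L) \<rightarrow>\<^sub>M stream_space N"
      using prob_space.not_empty measurable_cong_sets[OF _ refl] Cons_meas by blast+
  qed
  finally show ?thesis .
qed

lemma markov_law_unique:
  assumes K: "K \<in> N \<rightarrow>\<^sub>M prob_algebra N"
    and L1: "markov_law K N L1" and L2: "markov_law K N L2" and z: "z \<in> space N"
  shows "L1 z = L2 z"
proof -
  have L1_meas: "L1 \<in> N \<rightarrow>\<^sub>M prob_algebra (stream_space N)"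
    and L2_meas: "L2 \<in> N \<rightarrow>\<^sub>M prob_algebra (stream_space N)"
    using L1 L2 unfolding markov_law_def by blast+
  define R where "R A B \<longleftrightarrow> (\<exists>\<nu>\<in>space (prob_algebra N). A = \<nu> \<bind> L1 \<and> B = \<nu> \<bind> L2)" for A B
  show ?thesis
  proof (rule stream_space_coinduct[of R])
    show "R (L1 z) (L2 z)"
      unfolding R_def using measurable_space[OF measurable_return_prob_space z]
      by (intro bexI[where x = "return N z"])
         (simp_all add: bind_return[OF measurable_prob_algebraD[OF L1_meas] z]
           bind_return[OF measurable_prob_algebraD[OF L2_meas] z])
  next
    fix A B assume "R A B"
    then obtain \<nu> where \<nu>: "\<nu> \<in> space (prob_algebra N)" and A: "A = \<nu> \<bind> L1" and B: "B = \<nu> \<bind> L2"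
      unfolding R_def by blast
    have space_\<nu>: "space \<nu> = space N"
      using \<nu> sets_eq_imp_space_eq by (auto simp: space_prob_algebra)
    have "\<nu> \<bind> Li = \<nu> \<bind> (\<lambda>y. (K y \<bind> Li) \<bind> (\<lambda>\<omega>. return (stream_space N) (y ## \<omega>)))"
      if "markov_law K N Li" for Li
      using markov_law_head_tail[OF K that] by (intro bind_cong) (simp_all add: space_\<nu>)
    moreover have "AE y in \<nu>. R (K y \<bind> L1) (K y \<bind> L2)"
      unfolding R_def using measurable_space[OF K] by (intro AE_I2) (auto simp: space_\<nu>)
    ultimately show "\<exists>K'\<in>space (prob_algebra N). \<exists>A'\<in>N \<rightarrow>\<^sub>M prob_algebra (stream_space N).
        \<exists>B'\<in>N \<rightarrow>\<^sub>M prob_algebra (stream_space N). (AE y in K'. R (A' y) (B' y) \<or> A' y = B' y) \<and>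
        A = K' \<bind> (\<lambda>y. A' y \<bind> (\<lambda>\<omega>. return (stream_space N) (y ## \<omega>))) \<and>
        B = K' \<bind> (\<lambda>y. B' y \<bind> (\<lambda>\<omega>. return (stream_space N) (y ## \<omega>)))"
      using \<nu> A B L1 L2 measurable_bind_prob_space[OF K L1_meas] measurable_bind_prob_space[OF K L2_meas]
      by (intro bexI[of _ \<nu>] bexI[of _ "\<lambda>y. K y \<bind> L1"] bexI[of _ "\<lambda>y. K y \<bind> L2"]) auto
  qed
qed

lemma finite_Collect_Suc_iff: "finite {n. Q (Suc n)} \<longleftrightarrow> finite {n::nat. Q n}"
proof
  assume "finite {n. Q (Suc n)}"
  moreover have "{n. Q n} \<subseteq> insert 0 (Suc ` {n. Q (Suc n)})"
    using not0_implies_Suc by (auto simp: image_iff)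
  ultimately show "finite {n. Q n}"
    by (meson finite_imageI finite_insert finite_subset)
next
  assume "finite {n. Q n}"
  then have "finite (Suc -` {n. Q n})" by (rule finite_vimageI) simp
  then show "finite {n. Q (Suc n)}" by simp
qed

locale mrw_chain =
  fixes M :: "'a measure"
    and P :: "'a \<times> (real^2) \<Rightarrow> ('a \<times> (real^2)) measure"
    and L :: "'a \<times> (real^2) \<Rightarrow> ('a \<times> (real^2)) stream measure"
  assumes mrw: "MRW_kernel M P"
    and chain: "markov_law P (M \<Otimes>\<^sub>M borel) L"
begin

abbreviation N :: "('a \<times> (real^2)) measure" where "N \<equiv> M \<Otimes>\<^sub>M borel"
abbreviation \<Omega> :: "('a \<times> (real^2)) stream measure" where "\<Omega> \<equiv> stream_space N"

lemma P_meas[measurable]: "P \<in> N \<rightarrow>\<^sub>M prob_algebra N"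
  using mrw unfolding MRW_kernel_def by blast

lemma L_meas[measurable]: "L \<in> N \<rightarrow>\<^sub>M prob_algebra \<Omega>"
  using chain unfolding markov_law_def by blast

lemma L_first_step: "z \<in> space N \<Longrightarrow> L z = P z \<bind> (\<lambda>t. distr (L t) \<Omega> (\<lambda>\<omega>. z ## \<omega>))"
  using chain unfolding markov_law_def by blast

lemma P_space:
  assumes "z \<in> space N" shows "prob_space (P z)" "sets (P z) = sets N" "space (P z) = space N"
  using measurable_space[OF P_meas assms] sets_eq_imp_space_eq by (auto simp: space_prob_algebra)

lemma L_space:
  assumes "z \<in> space N" shows "prob_space (L z)" "sets (L z) = sets \<Omega>" "space (L z) = space \<Omega>"
  using measurable_space[OF L_meas assms] sets_eq_imp_space_eq by (auto simp: space_prob_algebra)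

definition translate :: "real^2 \<Rightarrow> 'a \<times> (real^2) \<Rightarrow> 'a \<times> (real^2)" where
  "translate t = (\<lambda>(y, s). (y, s + t))"

lemma translate_meas[measurable]: "translate t \<in> N \<rightarrow>\<^sub>M N"
  unfolding translate_def by measurable

lemma translate_space: "z \<in> space N \<Longrightarrow> translate t z \<in> space N"
  using measurable_space[OF translate_meas] .

lemma translate_translate: "translate t (translate s z) = translate (s + t) z"
  by (cases z) (simp add: translate_def add.assoc)

lemma translate_0: "translate 0 z = z"
  by (cases z) (simp add: translate_def)

lemma P_translate_origin:
  assumes x: "x \<in> space M"
  shows "P (x, s) = distr (P (x, 0)) N (translate s)"
proof (rule measure_eqI_generator_eq[OF Int_stable_pair_measure_generator[of M borel]])
  have xs: "(x, s) \<in> space N" and x0: "(x, 0) \<in> space N"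
    using x by (auto simp: space_pair_measure)
  show "{a \<times> b |a b. a \<in> sets M \<and> b \<in> sets borel} \<subseteq> Pow (space M \<times> space borel)"
    using sets.sets_into_space by fastforce
  show "sets (P (x, s)) = sigma_sets (space M \<times> space borel) {a \<times> b |a b. a \<in> sets M \<and> b \<in> sets borel}"
    using P_space(2)[OF xs] by (simp add: sets_pair_measure)
  show "sets (distr (P (x, 0)) N (translate s))
      = sigma_sets (space M \<times> space borel) {a \<times> b |a b. a \<in> sets M \<and> b \<in> sets borel}"
    by (simp add: sets_pair_measure)
  fix X assume "X \<in> {a \<times> b |a b. a \<in> sets M \<and> b \<in> sets (borel :: (real^2) measure)}"
  then obtain A B where X: "X = A \<times> B" "A \<in> sets M" "B \<in> sets (borel :: (real^2) measure)"
    by auto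
  have preimage: "translate s -` X \<inter> space N = A \<times> ((\<lambda>t. t - s) ` B)"
    using X sets.sets_into_space[OF X(2)]
    by (auto simp: translate_def space_pair_measure image_iff) (metis add_diff_cancel)
  have "emeasure (distr (P (x, 0)) N (translate s)) X = emeasure (P (x, 0)) (translate s -` X \<inter> space N)"
    using X by (subst emeasure_distr)
      (simp_all add: measurable_cong_sets[OF P_space(2)[OF x0] refl] P_space(3)[OF x0])
  also have "\<dots> = emeasure (P (x, s)) X"
    unfolding preimage using mrw x X unfolding MRW_kernel_def by auto
  finally show "emeasure (P (x, s)) X = emeasure (distr (P (x, 0)) N (translate s)) X" ..
next
  show "range (\<lambda>_. space M \<times> space borel) \<subseteq> {a \<times> b |a b. a \<in> sets M \<and> b \<in> sets (borel :: (real^2) measure)}"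
    by blast
  show "(\<Union>i. space M \<times> space (borel :: (real^2) measure)) = space M \<times> space borel"
    by simp
  interpret prob_space "P (x, s)"
    using P_space(1) x by (simp add: space_pair_measure)
  show "\<And>i. emeasure (P (x, s)) (space M \<times> space borel) \<noteq> \<infinity>"
    by simp
qed

lemma measurable_from_P: "z \<in> space N \<Longrightarrow> f \<in> N \<rightarrow>\<^sub>M X \<Longrightarrow> f \<in> P z \<rightarrow>\<^sub>M X"
  using measurable_cong_sets[OF P_space(2) refl] by blast

lemma measurable_from_L: "z \<in> space N \<Longrightarrow> f \<in> \<Omega> \<rightarrow>\<^sub>M X \<Longrightarrow> f \<in> L z \<rightarrow>\<^sub>M X"
  using measurable_cong_sets[OF L_space(2) refl] by blast

lemma Cons_meas: "y \<in> space N \<Longrightarrow> (\<lambda>\<omega>. y ## \<omega>) \<in> \<Omega> \<rightarrow>\<^sub>M \<Omega>"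
  by measurable

lemma distr_L_meas: "f \<in> \<Omega> \<rightarrow>\<^sub>M \<Omega> \<Longrightarrow> (\<lambda>u. distr (L u) \<Omega> f) \<in> N \<rightarrow>\<^sub>M subprob_algebra \<Omega>"
  by (rule measurable_prob_algebraD[OF measurable_compose[OF L_meas measurable_distr_prob_space]])

lemma P_translate:
  assumes z: "z \<in> space N"
  shows "P (translate t z) = distr (P z) N (translate t)"
proof -
  obtain x s where zs: "z = (x, s)" and x: "x \<in> space M"
    using z by (cases z) (auto simp: space_pair_measure)
  have x0: "(x, 0) \<in> space N" using x by (simp add: space_pair_measure)
  have "P (translate t z) = distr (P (x, 0)) N (translate (s + t))"
    using P_translate_origin[OF x, of "s + t"] by (simp add: zs translate_def)
  also have "\<dots> = distr (distr (P (x, 0)) N (translate s)) N (translate t)"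
    by (subst distr_distr[OF translate_meas measurable_from_P[OF x0 translate_meas]])
       (simp add: comp_def translate_translate)
  also have "distr (P (x, 0)) N (translate s) = P z"
    using P_translate_origin[OF x, of s] by (simp add: zs)
  finally show ?thesis .
qed

(* Translating every path of the chain started at translate (-t) y gives again a family of
   path laws with the Markov property for P; this is where translation invariance of P enters. *)
lemma markov_law_translated:
  "markov_law P N (\<lambda>y. distr (L (translate (-t) y)) \<Omega> (smap (translate t)))"
  unfolding markov_law_def
proof (intro conjI ballI)
  show "(\<lambda>y. distr (L (translate (-t) y)) \<Omega> (smap (translate t))) \<in> N \<rightarrow>\<^sub>M prob_algebra \<Omega>"
    by (rule measurable_compose[OF measurable_compose[OF translate_meas L_meas]
          measurable_distr_prob_space]) measurable
next
  fix y assume y: "y \<in> space N"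
  define y' where "y' = translate (-t) y"
  have y': "y' \<in> space N" and y'_back: "translate t y' = y"
    unfolding y'_def using translate_space[OF y] by (simp_all add: translate_translate translate_0)
  have smap_meas: "smap (translate t) \<in> \<Omega> \<rightarrow>\<^sub>M \<Omega>" by measurable
  let ?step = "\<lambda>\<omega>. y ## smap (translate t) \<omega>"
  have step_meas: "?step \<in> \<Omega> \<rightarrow>\<^sub>M \<Omega>" using y by measurable
  have "distr (L y') \<Omega> (smap (translate t))
      = distr (P y' \<bind> (\<lambda>u. distr (L u) \<Omega> (\<lambda>\<omega>. y' ## \<omega>))) \<Omega> (smap (translate t))"
    by (simp add: L_first_step[OF y'])
  also have "\<dots> = P y' \<bind> (\<lambda>u. distr (distr (L u) \<Omega> (\<lambda>\<omega>. y' ## \<omega>)) \<Omega> (smap (translate t)))"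
    by (rule distr_bind[OF measurable_from_P[OF y' distr_L_meas[OF Cons_meas[OF y']]] _ smap_meas])
       (use prob_space.not_empty[OF P_space(1)[OF y']] in blast)
  also have "\<dots> = P y' \<bind> (\<lambda>u. distr (L u) \<Omega> ?step)"
  proof (rule bind_cong[OF refl])
    fix u assume "u \<in> space (P y')"
    then have u: "u \<in> space N" using P_space(3)[OF y'] by simp
    show "distr (distr (L u) \<Omega> (\<lambda>\<omega>. y' ## \<omega>)) \<Omega> (smap (translate t)) = distr (L u) \<Omega> ?step"
      by (subst distr_distr[OF smap_meas measurable_from_L[OF u Cons_meas[OF y']]])
         (simp add: comp_def y'_back)
  qed
  also have "\<dots> = distr (P y) N (translate (-t)) \<bind> (\<lambda>u. distr (L u) \<Omega> ?step)"
    unfolding y'_def P_translate[OF y, of "-t"] ..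
  also have "\<dots> = P y \<bind> (\<lambda>v. distr (L (translate (-t) v)) \<Omega> ?step)"
    by (rule bind_distr[OF measurable_from_P[OF y translate_meas] distr_L_meas[OF step_meas]])
       (use prob_space.not_empty[OF P_space(1)[OF y]] in blast)
  also have "\<dots> = P y \<bind> (\<lambda>v. distr (distr (L (translate (-t) v)) \<Omega> (smap (translate t))) \<Omega> (\<lambda>\<omega>. y ## \<omega>))"
  proof (rule bind_cong[OF refl])
    fix v assume "v \<in> space (P y)"
    then have v: "translate (-t) v \<in> space N" using P_space(3)[OF y] translate_space by simp
    show "distr (L (translate (-t) v)) \<Omega> ?step
        = distr (distr (L (translate (-t) v)) \<Omega> (smap (translate t))) \<Omega> (\<lambda>\<omega>. y ## \<omega>)"
      by (subst distr_distr[OF Cons_meas[OF y] measurable_from_L[OF v smap_meas]]) (simp add: comp_def)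
  qed
  finally show "distr (L (translate (-t) y)) \<Omega> (smap (translate t))
      = P y \<bind> (\<lambda>v. distr (distr (L (translate (-t) v)) \<Omega> (smap (translate t))) \<Omega> (\<lambda>\<omega>. y ## \<omega>))"
    unfolding y'_def .
qed

lemma L_translate:
  assumes z: "z \<in> space N"
  shows "L (translate t z) = distr (L z) \<Omega> (smap (translate t))"
  using markov_law_unique[OF P_meas markov_law_translated[of t] chain translate_space[OF z, of t]]
  by (simp add: translate_translate translate_0)

definition near_io :: "real^2 \<Rightarrow> real \<Rightarrow> ('a \<times> (real^2)) stream set" where
  "near_io s \<epsilon> = {\<omega> \<in> space \<Omega>. infinite {n. norm (Sn n \<omega> - s) < \<epsilon>}}"

lemma near_io_sets[measurable]: "near_io s \<epsilon> \<in> sets \<Omega>"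
proof -
  have "near_io s \<epsilon> = {\<omega> \<in> space \<Omega>. \<forall>m. \<exists>n\<ge>m. norm (snd (\<omega> !! n) - s) < \<epsilon>}"
    unfolding near_io_def Sn_def infinite_nat_iff_unbounded_le by auto
  also have "\<dots> \<in> sets \<Omega>" by measurable
  finally show ?thesis .
qed

lemma near_io_pred[measurable]: "Measurable.pred \<Omega> (\<lambda>\<omega>. \<omega> \<in> near_io s \<epsilon>)"
  by measurable

lemma near_io_Cons:
  assumes y: "y \<in> space N"
  shows "y ## \<omega> \<in> near_io s \<epsilon> \<longleftrightarrow> \<omega> \<in> near_io s \<epsilon>"
  using y finite_Collect_Suc_iff[of "\<lambda>n. norm (Sn n (y ## \<omega>) - s) < \<epsilon>"]
  by (simp add: near_io_def Sn_def space_stream_space streams_Stream)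

lemma near_io_translate:
  "\<omega> \<in> space \<Omega> \<Longrightarrow> smap (translate t) \<omega> \<in> near_io s \<epsilon> \<longleftrightarrow> \<omega> \<in> near_io (s - t) \<epsilon>"
proof -
  assume \<omega>: "\<omega> \<in> space \<Omega>"
  have "norm (Sn n (smap (translate t) \<omega>) - s) = norm (Sn n \<omega> - (s - t))" for n
    by (cases "\<omega> !! n") (simp add: Sn_def translate_def algebra_simps)
  moreover have "smap (translate t) \<omega> \<in> space \<Omega>"
    using measurable_space[OF measurable_smap[OF translate_meas] \<omega>] .
  ultimately show ?thesis
    using \<omega> by (simp add: near_io_def)
qed

lemma near_io_mono:
  assumes "dist c s + \<delta> \<le> \<epsilon>"
  shows "near_io c \<delta> \<subseteq> near_io s \<epsilon>"
proof
  fix \<omega> assume \<omega>: "\<omega> \<in> near_io c \<delta>"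
  have "{n. norm (Sn n \<omega> - c) < \<delta>} \<subseteq> {n. norm (Sn n \<omega> - s) < \<epsilon>}"
  proof
    fix n assume "n \<in> {n. norm (Sn n \<omega> - c) < \<delta>}"
    then show "n \<in> {n. norm (Sn n \<omega> - s) < \<epsilon>}"
      using assms dist_triangle[of "Sn n \<omega>" s c] by (simp add: dist_norm)
  qed
  then show "\<omega> \<in> near_io s \<epsilon>"
    using \<omega> finite_subset unfolding near_io_def by blast
qed

lemma AE_L_first_step:
  assumes z: "z \<in> space N" and Q[measurable]: "Measurable.pred \<Omega> Q"
  shows "(AE \<omega> in L z. Q \<omega>) \<longleftrightarrow> (AE t in P z. AE \<omega> in L t. Q (z ## \<omega>))"
proof -
  have "(AE \<omega> in L z. Q \<omega>) \<longleftrightarrow> (AE t in P z. AE \<omega> in distr (L t) \<Omega> (\<lambda>\<omega>. z ## \<omega>). Q \<omega>)"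
    unfolding L_first_step[OF z]
    by (rule AE_bind[OF measurable_from_P[OF z distr_L_meas[OF Cons_meas[OF z]]] Q])
  also have "\<dots> \<longleftrightarrow> (AE t in P z. AE \<omega> in L t. Q (z ## \<omega>))"
  proof (rule AE_cong)
    fix t assume "t \<in> space (P z)"
    then have t: "t \<in> space N" using P_space(3)[OF z] by simp
    show "(AE \<omega> in distr (L t) \<Omega> (\<lambda>\<omega>. z ## \<omega>). Q \<omega>) \<longleftrightarrow> (AE \<omega> in L t. Q (z ## \<omega>))"
      by (rule AE_distr_iff[OF measurable_from_L[OF t Cons_meas[OF z]]]) measurable
  qed
  finally show ?thesis .
qed

definition sure_set :: "real^2 \<Rightarrow> real \<Rightarrow> ('a \<times> (real^2)) set" where
  "sure_set s \<epsilon> = {z \<in> space N. AE \<omega> in L z. \<omega> \<in> near_io s \<epsilon>}"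

lemma sure_set_sets[measurable]: "sure_set s \<epsilon> \<in> sets N"
proof -
  have "sure_set s \<epsilon> = {z \<in> space N. emeasure (L z) (space \<Omega> - near_io s \<epsilon>) = 0}"
    unfolding sure_set_def using L_space
    by (intro Collect_cong conj_cong refl AE_iff_measurable) auto
  also have "\<dots> \<in> sets N"
    using measurable_compose[OF measurable_prob_algebraD[OF L_meas]
        measurable_emeasure_subprob_algebra, of "space \<Omega> - near_io s \<epsilon>"]
    by measurable
  finally show ?thesis .
qed

(* Shift invariance of the event yields a weak strong-Markov property: once the chain is in
   sure_set s \<epsilon> at time k, the event occurs almost surely.  Induction on k, by first-step analysis. *)
lemma AE_hit_sure_set:
  "z \<in> space N \<Longrightarrow> AE \<omega> in L z. \<omega> !! k \<in> sure_set s \<epsilon> \<longrightarrow> \<omega> \<in> near_io s \<epsilon>"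
proof (induction k arbitrary: z)
  case 0
  show ?case
  proof (cases "z \<in> sure_set s \<epsilon>")
    case True
    then show ?thesis unfolding sure_set_def by (auto elim: AE_mp)
  next
    case False
    then show ?thesis by (subst AE_L_first_step[OF 0]) simp_all
  qed
next
  case (Suc k)
  have "AE t in P z. AE \<omega> in L t. \<omega> !! k \<in> sure_set s \<epsilon> \<longrightarrow> \<omega> \<in> near_io s \<epsilon>"
    by (rule AE_I2) (use Suc.IH P_space(3)[OF Suc.prems] in simp)
  then show ?case
    by (subst AE_L_first_step[OF Suc.prems]) (simp_all add: near_io_Cons[OF Suc.prems])
qed

lemma sure_set_translate:
  assumes y: "y \<in> space M" and sure: "(y, 0) \<in> sure_set (s - t) \<epsilon>"
  shows "(y, t) \<in> sure_set s \<epsilon>"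
proof -
  have y0: "(y, 0) \<in> space N" and yt: "(y, t) \<in> space N"
    using y by (simp_all add: space_pair_measure)
  have "L (y, t) = distr (L (y, 0)) \<Omega> (smap (translate t))"
    using L_translate[OF y0, of t] by (simp add: translate_def)
  then have "(AE \<omega> in L (y, t). \<omega> \<in> near_io s \<epsilon>)
      \<longleftrightarrow> (AE \<omega> in L (y, 0). smap (translate t) \<omega> \<in> near_io s \<epsilon>)"
    by (simp only:) (rule AE_distr_iff[OF measurable_from_L[OF y0 measurable_smap[OF translate_meas]]],
      measurable)
  also have "\<dots> \<longleftrightarrow> (AE \<omega> in L (y, 0). \<omega> \<in> near_io (s - t) \<epsilon>)"
    using L_space(3)[OF y0] by (intro AE_cong) (simp add: near_io_translate)
  finally show ?thesis
    using sure yt unfolding sure_set_def by simp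
qed

lemma L0_meas[measurable]: "(\<lambda>x. L (x, 0)) \<in> M \<rightarrow>\<^sub>M prob_algebra \<Omega>"
  by measurable

lemma init_law_return: "x \<in> space M \<Longrightarrow> init_law L (return M x) = L (x, 0)"
  unfolding init_law_def by (rule bind_return[OF measurable_prob_algebraD[OF L0_meas]])

lemma init_law_space:
  assumes "prob_space \<mu>" "sets \<mu> = sets M"
  shows "prob_space (init_law L \<mu>)" "sets (init_law L \<mu>) = sets \<Omega>"
proof -
  have \<mu>: "\<mu> \<in> space (prob_algebra M)" using assms by (simp add: space_prob_algebra)
  show "prob_space (init_law L \<mu>)" "sets (init_law L \<mu>) = sets \<Omega>"
    unfolding init_law_def using prob_space_bind'[OF \<mu> L0_meas] sets_bind'[OF \<mu> L0_meas] .
qed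

lemma AE_init_law:
  assumes "sets \<mu> = sets M" and [measurable]: "Measurable.pred \<Omega> Q"
  shows "(AE \<omega> in init_law L \<mu>. Q \<omega>) \<longleftrightarrow> (AE x in \<mu>. AE \<omega> in L (x, 0). Q \<omega>)"
  unfolding init_law_def
  by (rule AE_bind[where B = \<Omega>]) (simp_all add: measurable_cong_sets[OF assms(1) refl] measurable_prob_algebraD)

lemma AE_of_start_measure_eq_1:
  assumes x: "x \<in> space M"
    and "measure (init_law L (return M x)) {\<omega> \<in> space (init_law L (return M x)). Q \<omega>} = 1"
  shows "AE \<omega> in L (x, 0). Q \<omega>"
  using assms prob_space.AE_of_measure_Collect_eq_1[OF L_space(1)]
  by (simp add: init_law_return space_pair_measure)

lemma rec_set_eq_iff:
  assumes "prob_space Pr" "sets Pr = sets \<Omega>"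
  shows "rec_set G Pr = G \<longleftrightarrow> (\<forall>s\<in>G. \<forall>\<epsilon>>0. AE \<omega> in Pr. \<omega> \<in> near_io s \<epsilon>)"
proof -
  interpret prob_space Pr by fact
  have space: "space Pr = space \<Omega>" using assms(2) by (rule sets_eq_imp_space_eq)
  have event: "{\<omega> \<in> space Pr. infinite {n. norm (Sn n \<omega> - s) < \<epsilon>}} = near_io s \<epsilon>" for s \<epsilon>
    by (simp add: near_io_def space)
  have "measure Pr (near_io s \<epsilon>) = 1 \<longleftrightarrow> (AE \<omega> in Pr. \<omega> \<in> near_io s \<epsilon>)" for s \<epsilon>
    using prob_eq_1 assms(2) by simp
  then show ?thesis unfolding rec_set_def event by auto
qed

lemma rec_set_init_law_iff:
  assumes "prob_space \<mu>" "sets \<mu> = sets M"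
  shows "rec_set G (init_law L \<mu>) = G
    \<longleftrightarrow> (\<forall>s\<in>G. \<forall>\<epsilon>>0. AE x in \<mu>. AE \<omega> in L (x, 0). \<omega> \<in> near_io s \<epsilon>)"
  using rec_set_eq_iff[OF init_law_space[OF assms]] AE_init_law[OF assms(2) near_io_pred] by simp

lemma AE_visit_of_start_measure_eq_1:
  assumes x: "x \<in> space M"
    and "measure (init_law L (return M x))
           {\<omega> \<in> space (init_law L (return M x)). infinite {n. Xn n \<omega> \<in> W}} = 1"
  shows "AE \<omega> in L (x, 0). \<exists>n. Xn n \<omega> \<in> W"
  using AE_of_start_measure_eq_1[OF assms] by (rule eventually_mono) (use not_finite_existsD in blast)

end

(* The walk lives on a subgroup G of \<real>\<^sup>2 (only closure under differences is needed). *)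
locale mrw_lattice = mrw_chain +
  fixes G :: "(real^2) set"
  assumes G_diff: "\<And>a b. a \<in> G \<Longrightarrow> b \<in> G \<Longrightarrow> a - b \<in> G"
    and lattice: "\<And>x n. x \<in> space M \<Longrightarrow> AE \<omega> in L (x, 0). Sn n \<omega> \<in> G"
begin

definition recurrent_start :: "'a \<Rightarrow> bool" where
  "recurrent_start x \<longleftrightarrow> (\<forall>s\<in>G. \<forall>\<epsilon>>0. AE \<omega> in L (x, 0). \<omega> \<in> near_io s \<epsilon>)"

lemma rec_set_start_iff:
  "x \<in> space M \<Longrightarrow> rec_set G (init_law L (return M x)) = G \<longleftrightarrow> recurrent_start x"
  using rec_set_eq_iff[OF L_space(1,2)] unfolding recurrent_start_def
  by (simp add: init_law_return space_pair_measure)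

(* At the visiting time n the walk is at
   (X_n, S_n) with S_n \<in> G; by translation invariance, X_n \<in> W makes the event near s sure from
   there, and AE_hit_sure_set transfers this back to time 0. *)
lemma recurrent_start_if_visits:
  assumes x: "x \<in> space M"
    and W: "W \<subseteq> {y \<in> space M. recurrent_start y}"
    and visits: "AE \<omega> in L (x, 0). \<exists>n. Xn n \<omega> \<in> W"
  shows "recurrent_start x"
  unfolding recurrent_start_def
proof (intro ballI allI impI)
  fix s and \<epsilon> :: real assume s: "s \<in> G" and \<epsilon>: "\<epsilon> > 0"
  have x0: "(x, 0) \<in> space N" using x by (simp add: space_pair_measure)
  have "AE \<omega> in L (x, 0). \<forall>n. Sn n \<omega> \<in> G"
    using lattice[OF x] by (simp add: AE_all_countable)
  moreover have "AE \<omega> in L (x, 0). \<forall>k. \<omega> !! k \<in> sure_set s \<epsilon> \<longrightarrow> \<omega> \<in> near_io s \<epsilon>"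
    unfolding AE_all_countable using AE_hit_sure_set[OF x0] by blast
  ultimately show "AE \<omega> in L (x, 0). \<omega> \<in> near_io s \<epsilon>"
    using visits
  proof eventually_elim
    case (elim \<omega>)
    then obtain n where n: "Xn n \<omega> \<in> W" by blast
    have "(Xn n \<omega>, 0) \<in> sure_set (s - Sn n \<omega>) \<epsilon>"
      using n W G_diff[OF s] elim(1) \<epsilon>
      by (auto simp: sure_set_def recurrent_start_def space_pair_measure)
    then have "\<omega> !! n \<in> sure_set s \<epsilon>"
      using sure_set_translate n W by (force simp: Xn_def Sn_def)
    then show ?case using elim(2) by blast
  qed
qed

(* Recurrence only has to be tested on countably many targets and radii: a countable dense
   subset C of G and the radii 1 / Suc k. *)
lemma recurrent_start_countable_test:
  obtains C where "countable C" "C \<subseteq> G"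
    "\<And>x. (\<forall>c\<in>C. \<forall>k::nat. AE \<omega> in L (x, 0). \<omega> \<in> near_io c (1 / Suc k)) \<Longrightarrow> recurrent_start x"
proof -
  obtain C where C: "countable C" "C \<subseteq> G" "G \<subseteq> closure C"
    by (rule separable)
  have "recurrent_start x" if test: "\<forall>c\<in>C. \<forall>k::nat. AE \<omega> in L (x, 0). \<omega> \<in> near_io c (1 / Suc k)"
    for x
    unfolding recurrent_start_def
  proof (intro ballI allI impI)
    fix s and \<epsilon> :: real assume s: "s \<in> G" and \<epsilon>: "\<epsilon> > 0"
    obtain k :: nat where k: "2 / \<epsilon> < real k"
      using reals_Archimedean2 by blast
    define \<delta> where "\<delta> = 1 / real (Suc k)"
    have \<delta>: "\<delta> > 0" "2 * \<delta> < \<epsilon>"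
      using k \<epsilon> unfolding \<delta>_def by (auto simp: field_simps)
    obtain c where c: "c \<in> C" "dist c s < \<delta>"
      using s C(3) \<delta>(1) closure_approachable by blast
    have near: "near_io c \<delta> \<subseteq> near_io s \<epsilon>"
      using c(2) \<delta> by (intro near_io_mono) simp
    have "AE \<omega> in L (x, 0). \<omega> \<in> near_io c \<delta>"
      using test c(1) unfolding \<delta>_def by blast
    then show "AE \<omega> in L (x, 0). \<omega> \<in> near_io s \<epsilon>"
      by (rule eventually_mono) (use near in blast)
  qed
  then show thesis using C that by blast
qed

(* Part (ii): if \<pi>-almost every start is recurrent for each fixed target and radius, then
   (by the countable test) the set B of \<pi>-almost surely recurrent starts has \<pi>-measure one,
   Harris recurrence makes every chain visit B, and part (i) applies. *)
lemma recurrent_start_everywhere: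
  assumes \<pi>: "prob_space \<pi>" "sets \<pi> = sets M"
    and harris: "\<And>B x. B \<in> sets M \<Longrightarrow> measure \<pi> B > 0 \<Longrightarrow> x \<in> space M \<Longrightarrow>
        AE \<omega> in L (x, 0). \<exists>n. Xn n \<omega> \<in> B"
    and recurrent_\<pi>: "\<And>s \<epsilon>. s \<in> G \<Longrightarrow> \<epsilon> > 0 \<Longrightarrow> AE x in \<pi>. AE \<omega> in L (x, 0). \<omega> \<in> near_io s \<epsilon>"
    and x: "x \<in> space M"
  shows "recurrent_start x"
proof -
  interpret \<pi>: prob_space \<pi> by fact
  have space_\<pi>: "space \<pi> = space M" using \<pi>(2) by (rule sets_eq_imp_space_eq)
  obtain C where C: "countable C" "C \<subseteq> G"
    and test: "\<And>y. (\<forall>c\<in>C. \<forall>k::nat. AE \<omega> in L (y, 0). \<omega> \<in> near_io c (1 / Suc k)) \<Longrightarrow> recurrent_start y"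
    using recurrent_start_countable_test by blast
  define B where "B = {y \<in> space M. \<forall>c\<in>C. \<forall>k::nat. (y, 0) \<in> sure_set c (1 / Suc k)}"
  have B_sets: "B \<in> sets M"
    unfolding B_def using C(1) by measurable
  have "AE y in \<pi>. \<forall>c\<in>C. \<forall>k::nat. AE \<omega> in L (y, 0). \<omega> \<in> near_io c (1 / Suc k)"
    using C recurrent_\<pi> by (simp add: AE_ball_countable AE_all_countable subset_iff)
  then have "AE y in \<pi>. y \<in> B"
    using AE_space[of \<pi>] by eventually_elim (auto simp: B_def sure_set_def space_pair_measure space_\<pi>)
  then have "measure \<pi> B > 0"
    using \<pi>.prob_eq_1[of B] B_sets \<pi>(2) by simp
  moreover have "B \<subseteq> {y \<in> space M. recurrent_start y}"
    using test by (auto simp: B_def sure_set_def)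
  ultimately show ?thesis
    using recurrent_start_if_visits[OF x] harris[OF B_sets _ x] by blast
qed

end

(* The theorem as stated in the paper. *)
theorem mainTheorem8:
  fixes M :: "'a measure"
    and P :: "'a \<times> (real^2) \<Rightarrow> ('a \<times> (real^2)) measure"
    and L :: "'a \<times> (real^2) \<Rightarrow> ('a \<times> (real^2)) stream measure"
    and \<pi> :: "'a measure"
    and G :: "(real^2) set"
  assumes mrw: "MRW_kernel M P"
    and chain: "markov_law P (M \<Otimes>\<^sub>M borel) L"
    and inv: "invariant_prob M (drive_kernel M P) \<pi>"
    and integ: "integrable (init_law L \<pi>) (Sn 1)"
    and mean0: "(\<integral>\<omega>. Sn 1 \<omega> \<partial>init_law L \<pi>) = 0"
    and G: "closed_subgroup_2d G"
    and latt: "\<forall>x\<in>space M. \<forall>n. measure (init_law L (return M x))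
                 {\<omega> \<in> space (init_law L (return M x)). Sn n \<omega> \<in> G} = 1"
  defines "\<A> \<equiv> {x \<in> space M. rec_set G (init_law L (return M x)) = G}"
  shows "(\<forall>x\<in>space M.
            measure (init_law L (return M x))
              {\<omega> \<in> space (init_law L (return M x)). infinite {n. Xn n \<omega> \<in> \<A>}} = 1
            \<longrightarrow> x \<in> \<A>)
       \<and> (harris_recurrent M L \<pi> \<and> rec_set G (init_law L \<pi>) = G \<longrightarrow>
            \<A> = space M \<and>
            (\<forall>\<mu>. prob_space \<mu> \<and> sets \<mu> = sets M \<longrightarrow> rec_set G (init_law L \<mu>) = G))"
proof -
  interpret mrw_chain M P L using mrw chain by (rule mrw_chain.intro)
  interpret mrw_lattice M P L G
  proof
    show "a - b \<in> G" if "a \<in> G" "b \<in> G" for a b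
      using G that unfolding closed_subgroup_2d_def by blast
    show "AE \<omega> in L (x, 0). Sn n \<omega> \<in> G" if "x \<in> space M" for x n
      using latt that by (intro AE_of_start_measure_eq_1) auto
  qed
  have A_eq: "\<A> = {x \<in> space M. recurrent_start x}"
    unfolding \<A>_def using rec_set_start_iff by blast
  have "x \<in> \<A>" if x: "x \<in> space M"
    and visits: "measure (init_law L (return M x))
       {\<omega> \<in> space (init_law L (return M x)). infinite {n. Xn n \<omega> \<in> \<A>}} = 1" for x
    using recurrent_start_if_visits[OF x _ AE_visit_of_start_measure_eq_1[OF x visits]] x
    unfolding A_eq by blast
  moreover have "\<A> = space M \<and> (\<forall>\<mu>. prob_space \<mu> \<and> sets \<mu> = sets M \<longrightarrow> rec_set G (init_law L \<mu>) = G)"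
    if harris: "harris_recurrent M L \<pi>" and rec_\<pi>: "rec_set G (init_law L \<pi>) = G"
  proof -
    have \<pi>: "prob_space \<pi>" "sets \<pi> = sets M"
      using inv unfolding invariant_prob_def by auto
    have everywhere: "recurrent_start x" if "x \<in> space M" for x
    proof (rule recurrent_start_everywhere[OF \<pi> AE_visit_of_start_measure_eq_1 _ that])
      show "measure (init_law L (return M y))
          {\<omega> \<in> space (init_law L (return M y)). infinite {n. Xn n \<omega> \<in> B}} = 1"
        if "B \<in> sets M" "measure \<pi> B > 0" "y \<in> space M" for B y
        using harris that unfolding harris_recurrent_def by blast
    qed (use rec_\<pi> rec_set_init_law_iff[OF \<pi>] in auto)
    have "rec_set G (init_law L \<mu>) = G" if \<mu>: "prob_space \<mu>" "sets \<mu> = sets M" for \<mu>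
      unfolding rec_set_init_law_iff[OF \<mu>]
      by (intro ballI allI impI, rule AE_I2)
        (use everywhere sets_eq_imp_space_eq[OF \<mu>(2)] in \<open>auto simp: recurrent_start_def\<close>)
    then show ?thesis using everywhere A_eq by auto
  qed
  ultimately show ?thesis by blast
qed

end
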